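(* Let $f:\{0,1\}^n\to\{0,1\}$ be $\varepsilon$-far from every $k$-junta. Then the unitary $U_f=\mathrm{diag}\big((-1)^{f(x)}\big)_{x\in\{0,1\}^n}$ is $\sqrt{\varepsilon/2}$-far from every quantum $k$-junta, i.e. $\mathrm{dist}(U_f,V)\ge\sqrt{\varepsilon/2}$ for every quantum $k$-junta $V\in\mathcal{U}_N$.
   Context: $N=2^n$, $\mathcal{U}_N$ is the set of $N\times N$ unitaries. A Boolean function is a $k$-junta if it depends on at most... precisely: $f(x)=g(x_{i_1},\dots,x_{i_k})$ for some $g:\{0,1\}^k\to\{0,1\}$ and fixed indices; $f$ is $\varepsilon$-far from every $k$-junta if $\Pr_{x\sim\{0,1\}^n}[f(x)\ne g(x)]\ge\varepsilon$ for every $k$-junta $g$ ($x$ uniform). A unitary $U\in\mathcal{U}_N$ is a quantum $k$-junta if $U=V_S\otimes I_{\overline{S}}$ for some $S\subseteq[n]$ with $|S|=k$ and $V_S\in\mathcal{U}_{2^k}$ acting on the qubits in $S$. For $A,B\in\mathbb{C}^{N\times N}$, $\mathrm{dist}(A,B):=\min_{\theta\in[0,2\pi)}\frac{1}{\sqrt{2N}}\|e^{i\theta}A-B\|$ with $\|\cdot\|$ the Frobenius norm. *)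

theory Defs
  imports "HOL-Analysis.Analysis" "Jordan_Normal_Form.Matrix"
begin

(* Basis states of n qubits / points of {0,1}^n are encoded as natural numbers
   x < 2^n; the i-th bit (i < n) of x is  bit x i. *)

definition cadj :: "complex mat \<Rightarrow> complex mat" where
  "cadj A = mat (dim_col A) (dim_row A) (\<lambda>(i,j). cnj (A $$ (j,i)))"

definition unitary_mat :: "nat \<Rightarrow> complex mat \<Rightarrow> bool" where
  "unitary_mat m U \<longleftrightarrow> U \<in> carrier_mat m m \<and> cadj U * U = 1\<^sub>m m \<and> U * cadj U = 1\<^sub>m m"

definition frob_norm :: "complex mat \<Rightarrow> real" where
  "frob_norm A = sqrt (\<Sum>i<dim_row A. \<Sum>j<dim_col A. (cmod (A $$ (i,j)))\<^sup>2)"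

(* dist(A,B) = min_{theta in [0,2pi)} ||e^{i theta} A - B|| / sqrt(2N), N = dimension;
   the minimum exists by compactness, so it equals the infimum. *)
definition qdist :: "complex mat \<Rightarrow> complex mat \<Rightarrow> real" where
  "qdist A B = (INF \<theta>\<in>{0..<2*pi}.
      frob_norm (exp (\<i> * complex_of_real \<theta>) \<cdot>\<^sub>m A - B) / sqrt (2 * real (dim_row A)))"

definition is_junta :: "nat \<Rightarrow> nat \<Rightarrow> (nat \<Rightarrow> bool) \<Rightarrow> bool" where
  "is_junta n k h \<longleftrightarrow> (\<exists>is :: nat list. \<exists>g :: bool list \<Rightarrow> bool.
      length is = k \<and> set is \<subseteq> {..<n} \<and> (\<forall>x<2^n. h x = g (map (bit x) is)))"

definition disagree_prob :: "nat \<Rightarrow> (nat \<Rightarrow> bool) \<Rightarrow> (nat \<Rightarrow> bool) \<Rightarrow> real" where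
  "disagree_prob n f h = real (card {x. x < 2^n \<and> f x \<noteq> h x}) / 2^n"

definition far_from_juntas :: "nat \<Rightarrow> nat \<Rightarrow> real \<Rightarrow> (nat \<Rightarrow> bool) \<Rightarrow> bool" where
  "far_from_juntas n k \<epsilon> f \<longleftrightarrow> (\<forall>h. is_junta n k h \<longrightarrow> disagree_prob n f h \<ge> \<epsilon>)"

definition phase_oracle :: "nat \<Rightarrow> (nat \<Rightarrow> bool) \<Rightarrow> complex mat" where
  "phase_oracle n f = mat (2^n) (2^n) (\<lambda>(x,y). if x = y then (if f x then -1 else 1) else 0)"

(* index in {0,..,2^|S|-1} of the restriction of basis state x to the qubits in S
   (qubits of S taken in increasing order) *)
definition restr_idx :: "nat set \<Rightarrow> nat \<Rightarrow> nat" where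
  "restr_idx S x = (\<Sum>j<card S. if bit x (sorted_list_of_set S ! j) then 2^j else 0)"

(* V_S \<otimes> I_{complement S} on n qubits: <x| V_S \<otimes> I |y> =
   <x_S|V|y_S> * [x_{complement S} = y_{complement S}] *)
definition embed_on :: "nat \<Rightarrow> nat set \<Rightarrow> complex mat \<Rightarrow> complex mat" where
  "embed_on n S V = mat (2^n) (2^n) (\<lambda>(x,y).
      if (\<forall>i\<in>{..<n} - S. bit x i = bit y i) then V $$ (restr_idx S x, restr_idx S y) else 0)"

definition quantum_junta :: "nat \<Rightarrow> nat \<Rightarrow> complex mat \<Rightarrow> bool" where
  "quantum_junta n k U \<longleftrightarrow> (\<exists>S V. S \<subseteq> {..<n} \<and> card S = k \<and> unitary_mat (2^k) V
      \<and> U = embed_on n S V)"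

end

theory Submission
  imports Defs
begin

(* Fix a global phase c. The diagonal entry of V = V_S \<otimes> I at x depends only on the
   restriction of x to S, so the sign pattern h x = [Re (cnj c * V x x) < 0] is a k-junta.
   Wherever f and h disagree, the diagonal entry c (-1)^(f x) - V x x of c U_f - V has modulus
   at least 1. Since f is \<epsilon>-far from h, at least \<epsilon> N diagonal entries are that large, so
   the squared Frobenius norm of c U_f - V is at least \<epsilon> N, whatever c is. *)

lemma one_le_cmod_sign_phase_diff:
  fixes c d :: complex and s :: real
  assumes "cmod c = 1" and "s = 1 \<or> s = -1" and "s * Re (cnj c * d) \<le> 0"
  shows "1 \<le> cmod (c * of_real s - d)"
proof -
  have "1 \<le> \<bar>s - Re (cnj c * d)\<bar>"
    using assms(2,3) by (auto simp: abs_if)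
  also have "\<dots> \<le> cmod (of_real s - cnj c * d)"
    using abs_Re_le_cmod[of "of_real s - cnj c * d"] by simp
  also have "of_real s - cnj c * d = cnj c * (c * of_real s - d)"
    using assms(1) by (simp add: algebra_simps complex_norm_square[symmetric])
  finally show ?thesis
    by (simp add: norm_mult assms(1))
qed

lemma sum_diag_le_frob_norm_sq:
  assumes "D \<subseteq> {..<dim_row A}" and "D \<subseteq> {..<dim_col A}"
  shows "(\<Sum>x\<in>D. (cmod (A $$ (x,x)))\<^sup>2) \<le> (frob_norm A)\<^sup>2"
proof -
  have "(\<Sum>x\<in>D. (cmod (A $$ (x,x)))\<^sup>2) \<le> (\<Sum>x\<in>D. \<Sum>j<dim_col A. (cmod (A $$ (x,j)))\<^sup>2)"
    using assms(2) by (intro sum_mono member_le_sum) auto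
  also have "\<dots> \<le> (\<Sum>x<dim_row A. \<Sum>j<dim_col A. (cmod (A $$ (x,j)))\<^sup>2)"
    using assms(1) by (intro sum_mono2 sum_nonneg) auto
  finally show ?thesis
    by (simp add: frob_norm_def sum_nonneg)
qed

lemma dim_embed_on [simp]:
  "dim_row (embed_on n S V) = 2^n" "dim_col (embed_on n S V) = 2^n"
  by (simp_all add: embed_on_def)

lemma diag_embed_on:
  assumes "x < 2^n"
  shows "embed_on n S V $$ (x,x) = V $$ (restr_idx S x, restr_idx S x)"
  using assms by (simp add: embed_on_def)

lemma is_junta_comp_restr_idx:
  assumes "S \<subseteq> {..<n}" and "card S = k"
  shows "is_junta n k (\<lambda>x. g (restr_idx S x))"
proof -
  define ix where "ix = sorted_list_of_set S"
  define idx where "idx l = (\<Sum>j<length l. if l ! j then 2^j else 0 :: nat)" for l :: "bool list"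
  have "finite S" using assms(1) finite_subset by blast
  then have "length ix = k" "set ix \<subseteq> {..<n}"
    using assms by (simp_all add: ix_def)
  moreover have "restr_idx S x = idx (map (bit x) ix)" for x
    using \<open>length ix = k\<close> assms(2) by (simp add: restr_idx_def idx_def ix_def)
  ultimately show ?thesis
    unfolding is_junta_def by (intro exI[of _ ix] exI[of _ "g \<circ> idx"]) simp
qed

lemma frob_norm_phase_oracle_diff_embed_on_ge:
  assumes far: "far_from_juntas n k \<epsilon> f"
    and S: "S \<subseteq> {..<n}" "card S = k"
    and c: "cmod c = 1"
  shows "\<epsilon> * 2^n \<le> (frob_norm (c \<cdot>\<^sub>m phase_oracle n f - embed_on n S V))\<^sup>2"
proof -
  define A where "A = c \<cdot>\<^sub>m phase_oracle n f - embed_on n S V"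
  define h where "h x = (Re (cnj c * V $$ (restr_idx S x, restr_idx S x)) < 0)" for x
  define D where "D = {x. x < 2^n \<and> f x \<noteq> h x}"
  have dims: "dim_row A = 2^n" "dim_col A = 2^n"
    by (simp_all add: A_def phase_oracle_def)
  have "is_junta n k h"
    unfolding h_def using S by (rule is_junta_comp_restr_idx)
  then have "\<epsilon> * 2^n \<le> real (card D)"
    using far by (simp add: far_from_juntas_def disagree_prob_def D_def pos_le_divide_eq)
  also have "\<dots> \<le> (\<Sum>x\<in>D. (cmod (A $$ (x,x)))\<^sup>2)"
  proof -
    have "1 \<le> cmod (A $$ (x,x))" if "x \<in> D" for x
    proof -
      define s :: real where "s = (if f x then -1 else 1)"
      define d where "d = V $$ (restr_idx S x, restr_idx S x)"
      have "x < 2^n" using that by (simp add: D_def)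
      then have "A $$ (x,x) = c * of_real s - d"
        by (simp add: A_def phase_oracle_def diag_embed_on s_def d_def)
      moreover have "1 \<le> cmod (c * of_real s - d)"
        by (rule one_le_cmod_sign_phase_diff[OF c])
          (use that in \<open>auto simp: D_def h_def s_def d_def\<close>)
      ultimately show ?thesis by simp
    qed
    then show ?thesis
      by (simp add: sum_bounded_below[where K = 1, simplified] one_le_power)
  qed
  also have "\<dots> \<le> (frob_norm A)\<^sup>2"
    by (rule sum_diag_le_frob_norm_sq) (auto simp: D_def dims)
  finally show ?thesis
    by (simp add: A_def)
qed

lemma sqrt_le_qdist:
  fixes \<delta> :: real
  assumes "0 < dim_row A"
    and "\<And>c. cmod c = 1 \<Longrightarrow> \<delta> * dim_row A \<le> (frob_norm (c \<cdot>\<^sub>m A - B))\<^sup>2"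
  shows "sqrt (\<delta> / 2) \<le> qdist A B"
  unfolding qdist_def
proof (rule cINF_greatest)
  show "{0..<2*pi} \<noteq> {}" by simp
  fix \<theta> :: real
  define m where "m = real (dim_row A)"
  define X where "X = exp (\<i> * of_real \<theta>) \<cdot>\<^sub>m A - B"
  have "m > 0" using assms(1) by (simp add: m_def)
  have "sqrt (\<delta> / 2) = sqrt (\<delta> * m) / sqrt (2 * m)"
    using \<open>m > 0\<close> by (simp add: real_sqrt_divide[symmetric])
  also have "sqrt (\<delta> * m) \<le> sqrt ((frob_norm X)\<^sup>2)"
    using assms(2)[of "exp (\<i> * of_real \<theta>)"]
    by (intro real_sqrt_le_mono) (simp add: m_def X_def norm_exp_i_times)
  also have "\<dots> = frob_norm X"
    by (simp add: frob_norm_def sum_nonneg)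
  finally show "sqrt (\<delta> / 2) \<le> frob_norm X / sqrt (2 * real (dim_row A))"
    by (simp add: m_def divide_right_mono)
qed

theorem mainTheorem3:
  fixes n k :: nat and \<epsilon> :: real and f :: "nat \<Rightarrow> bool"
  assumes "far_from_juntas n k \<epsilon> f"
  shows "\<forall>V. unitary_mat (2^n) V \<and> quantum_junta n k V \<longrightarrow>
           qdist (phase_oracle n f) V \<ge> sqrt (\<epsilon> / 2)"
proof (intro allI impI)
  fix V assume "unitary_mat (2^n) V \<and> quantum_junta n k V"
  then obtain S V\<^sub>S where S: "S \<subseteq> {..<n}" "card S = k" and V: "V = embed_on n S V\<^sub>S"
    unfolding quantum_junta_def by blast
  show "qdist (phase_oracle n f) V \<ge> sqrt (\<epsilon> / 2)"
    unfolding V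
  proof (rule sqrt_le_qdist)
    show "0 < dim_row (phase_oracle n f)"
      by (simp add: phase_oracle_def)
    show "\<epsilon> * dim_row (phase_oracle n f)
            \<le> (frob_norm (c \<cdot>\<^sub>m phase_oracle n f - embed_on n S V\<^sub>S))\<^sup>2" if "cmod c = 1" for c
      using frob_norm_phase_oracle_diff_embed_on_ge[OF assms S that]
      by (simp add: phase_oracle_def)
  qed
qed

end
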